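(* Let $(N,\langle\cdot,\cdot\rangle,\varphi)$ be a modified $H$-type group (see context), with $m=\dim\mathfrak v$. For all $e,e'\in\mathfrak v$ and $z,z'\in\mathfrak z$ the Ricci tensor satisfies $$\mathrm{Ric}(e,z)=0,\qquad \mathrm{Ric}(e,e')=-\tfrac{\xi}{2}\langle e,e'\rangle,\qquad \mathrm{Ric}(z,z')=\tfrac m4\langle z,z'\rangle_\varphi .$$
   Context: Let $N$ be a 2-step nilpotent real Lie group with Lie algebra $\mathfrak n$, Lie bracket $[\cdot,\cdot]$ and center $\mathfrak z$, endowed with a left-invariant pseudo-Riemannian metric $\langle\cdot,\cdot\rangle$ (identified with an inner product on $\mathfrak n$) for which $\mathfrak z$ is nondegenerate. Put $\mathfrak v=\mathfrak z^\perp$. For $z\in\mathfrak z$ define $j(z)\in\mathrm{End}(\mathfrak v)$ by $\langle [x,y],z\rangle=\langle y,j(z)x\rangle$ for all $x,y\in\mathfrak v$. Given a quadratic form $\varphi$ on $\mathfrak z$, $(N,\langle\cdot,\cdot\rangle,\varphi)$ is a modified $H$-type group if $j(z)^2=-\varphi(z)\,\mathrm{Id}_{\mathfrak v}$ for all $z\in\mathfrak z$ (equivalently $\langle j(z)x,j(z)y\rangle=\varphi(z)\langle x,y\rangle$). $\langle\cdot,\cdot\rangle_\varphi$ denotes the symmetric bilinear form on $\mathfrak z$ obtained by polarizing $\varphi$ (so $\langle z,z\rangle_\varphi=\varphi(z)$). Let $\{z_1,\dots,z_p\}$ be a pseudo-orthonormal basis of $\mathfrak z$ and set $\xi=\sum_{k=1}^p\langle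 z_k,z_k\rangle\,\varphi(z_k)$ (independent of the basis). $\mathrm{Ric}$ is the Ricci tensor of the Levi-Civita connection. *)

theory Defs
  imports "HOL-Analysis.Analysis"
begin

text \<open>The Lie algebra n is modelled as a finite-dimensional real vector space 'a
  (class euclidean_space; its built-in Euclidean inner product is used ONLY to
  compute traces, which are basis independent).\<close>

definition lie_bracket :: "('a::real_vector \<Rightarrow> 'a \<Rightarrow> 'a) \<Rightarrow> bool" where
  "lie_bracket br \<longleftrightarrow> bilinear br \<and> (\<forall>x. br x x = 0) \<and>
     (\<forall>x y w. br x (br y w) + br y (br w x) + br w (br x y) = 0)"

definition two_step_nilpotent :: "('a::real_vector \<Rightarrow> 'a \<Rightarrow> 'a) \<Rightarrow> bool" where
  "two_step_nilpotent br \<longleftrightarrow> lie_bracket br \<and> (\<exists>x y. br x y \<noteq> 0) \<and>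
     (\<forall>x y w. br (br x y) w = 0)"

definition lie_center :: "('a::real_vector \<Rightarrow> 'a \<Rightarrow> 'a) \<Rightarrow> 'a set" where
  "lie_center br = {x. \<forall>y. br x y = 0}"

definition g_orth :: "('a \<Rightarrow> 'a \<Rightarrow> real) \<Rightarrow> 'a set \<Rightarrow> 'a set" where
  "g_orth g S = {x. \<forall>y\<in>S. g x y = 0}"

definition nondegenerate_on :: "('a::real_vector \<Rightarrow> 'a \<Rightarrow> real) \<Rightarrow> 'a set \<Rightarrow> bool" where
  "nondegenerate_on g S \<longleftrightarrow> (\<forall>x\<in>S. (\<forall>y\<in>S. g x y = 0) \<longrightarrow> x = 0)"

definition scalar_product :: "('a::real_vector \<Rightarrow> 'a \<Rightarrow> real) \<Rightarrow> bool" where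
  "scalar_product g \<longleftrightarrow> bilinear g \<and> (\<forall>x y. g x y = g y x) \<and> nondegenerate_on g UNIV"

text \<open>Levi-Civita connection on left-invariant fields, via the Koszul formula
  2 g(nabla_x y, w) = g([x,y],w) - g([y,w],x) + g([w,x],y).\<close>
definition lc_nabla :: "('a::real_vector \<Rightarrow> 'a \<Rightarrow> real) \<Rightarrow> ('a \<Rightarrow> 'a \<Rightarrow> 'a) \<Rightarrow> 'a \<Rightarrow> 'a \<Rightarrow> 'a" where
  "lc_nabla g br x y = (THE u. \<forall>w. 2 * g u w = g (br x y) w - g (br y w) x + g (br w x) y)"

definition curv :: "('a::real_vector \<Rightarrow> 'a \<Rightarrow> real) \<Rightarrow> ('a \<Rightarrow> 'a \<Rightarrow> 'a) \<Rightarrow> 'a \<Rightarrow> 'a \<Rightarrow> 'a \<Rightarrow> 'a" where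
  "curv g br x y w = lc_nabla g br x (lc_nabla g br y w) - lc_nabla g br y (lc_nabla g br x w)
      - lc_nabla g br (br x y) w"

definition ricci :: "('a::euclidean_space \<Rightarrow> 'a \<Rightarrow> real) \<Rightarrow> ('a \<Rightarrow> 'a \<Rightarrow> 'a) \<Rightarrow> 'a \<Rightarrow> 'a \<Rightarrow> real" where
  "ricci g br x y = (\<Sum>b\<in>Basis. inner (curv g br b x y) b)"

definition jmap :: "('a::real_vector \<Rightarrow> 'a \<Rightarrow> real) \<Rightarrow> ('a \<Rightarrow> 'a \<Rightarrow> 'a) \<Rightarrow> 'a \<Rightarrow> 'a \<Rightarrow> 'a" where
  "jmap g br z x = (THE u. u \<in> g_orth g (lie_center br) \<and>
      (\<forall>y\<in>g_orth g (lie_center br). g (br x y) z = g y u))"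

definition quadratic_form_on :: "'a::real_vector set \<Rightarrow> ('a \<Rightarrow> real) \<Rightarrow> bool" where
  "quadratic_form_on Z \<phi> \<longleftrightarrow> (\<exists>B. bilinear B \<and> (\<forall>x y. B x y = (B y x :: real)) \<and> (\<forall>z\<in>Z. \<phi> z = B z z))"

definition polar :: "('a::real_vector \<Rightarrow> real) \<Rightarrow> 'a \<Rightarrow> 'a \<Rightarrow> real" where
  "polar \<phi> z z' = (\<phi> (z + z') - \<phi> z - \<phi> z') / 2"

definition modified_H_type :: "('a::real_vector \<Rightarrow> 'a \<Rightarrow> real) \<Rightarrow> ('a \<Rightarrow> 'a \<Rightarrow> 'a) \<Rightarrow> ('a \<Rightarrow> real) \<Rightarrow> bool" where
  "modified_H_type g br \<phi> \<longleftrightarrow> two_step_nilpotent br \<and> scalar_product g \<and>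
     nondegenerate_on g (lie_center br) \<and> quadratic_form_on (lie_center br) \<phi> \<and>
     (\<forall>z\<in>lie_center br. \<forall>x\<in>g_orth g (lie_center br). jmap g br z (jmap g br z x) = - (\<phi> z *\<^sub>R x))"

definition pseudo_orthonormal_basis :: "('a::real_vector \<Rightarrow> 'a \<Rightarrow> real) \<Rightarrow> 'a set \<Rightarrow> 'a set \<Rightarrow> bool" where
  "pseudo_orthonormal_basis g S B \<longleftrightarrow> finite B \<and> B \<subseteq> S \<and> independent B \<and> span B = S \<and>
     (\<forall>b\<in>B. g b b = 1 \<or> g b b = -1) \<and> (\<forall>b\<in>B. \<forall>b'\<in>B. b \<noteq> b' \<longrightarrow> g b b' = 0)"

end

theory Submission
  imports Defs
begin

(* The Koszul formula gives nabla_x y = 1/2 ([x,y] - j(y_z) x - j(x_z) y), where x_z is the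
   g-orthogonal projection of x to the center, so every curvature operator is a combination of
   brackets and of j. The Ricci traces then reduce to three facts: the trace of the skew-adjoint
   maps j(z) vanishes; the trace of a map with values in the center is computed in a
   pseudo-orthonormal basis of the center, where j(z_k)^2 = -phi(z_k) produces xi; and polarizing
   j(z)^2 = -phi(z) gives j(z) j(z') + j(z') j(z) = -2 <z,z'>_phi on v, whose trace is
   -2 m <z,z'>_phi. *)

definition trace_map :: "('a::euclidean_space \<Rightarrow> 'a) \<Rightarrow> real" where
  "trace_map A = (\<Sum>b\<in>Basis. inner (A b) b)"

lemma trace_map_add: "trace_map (\<lambda>w. A w + B w) = trace_map A + trace_map B"
  by (simp add: trace_map_def inner_add_left sum.distrib)

lemma trace_map_diff: "trace_map (\<lambda>w. A w - B w) = trace_map A - trace_map B"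
  by (simp add: trace_map_def inner_diff_left sum_subtractf)

lemma trace_map_scaleR: "trace_map (\<lambda>w. c *\<^sub>R A w) = c * trace_map A"
  by (simp add: trace_map_def sum_distrib_left)

lemma trace_map_neg: "trace_map (\<lambda>w. - A w) = - trace_map A"
  by (simp add: trace_map_def sum_negf)

lemma trace_map_id: "trace_map (\<lambda>w::'a::euclidean_space. w) = real DIM('a)"
  by (simp add: trace_map_def)

lemma linear_functional_expansion:
  fixes f :: "'a::euclidean_space \<Rightarrow> real"
  assumes "linear f"
  shows "f x = (\<Sum>b\<in>Basis. inner x b * f b)"
  using Linear_Algebra.linear_componentwise[OF assms, of x 1] by simp

lemma inner_sum_Basis_functional:
  fixes f :: "'a::euclidean_space \<Rightarrow> real"
  assumes "linear f"
  shows "inner (\<Sum>b\<in>Basis. f b *\<^sub>R b) w = f w"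
proof -
  have "inner (\<Sum>b\<in>Basis. f b *\<^sub>R b) w = (\<Sum>b\<in>Basis. inner w b * f b)"
    unfolding inner_sum_left inner_scaleR_left by (rule sum.cong) (simp_all add: inner_commute)
  also have "\<dots> = f w"
    by (rule linear_functional_expansion[OF assms, symmetric])
  finally show ?thesis .
qed

lemma trace_map_comp_commute:
  fixes A B :: "'a::euclidean_space \<Rightarrow> 'a"
  assumes "linear A" and "linear B"
  shows "trace_map (\<lambda>w. A (B w)) = trace_map (\<lambda>w. B (A w))"
proof -
  have "trace_map (\<lambda>w. A (B w)) = (\<Sum>b\<in>Basis. \<Sum>c\<in>Basis. inner (B b) c * inner (A c) b)"
    unfolding trace_map_def by (intro sum.cong refl Linear_Algebra.linear_componentwise assms(1))
  also have "\<dots> = (\<Sum>c\<in>Basis. \<Sum>b\<in>Basis. inner (A c) b * inner (B b) c)"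
    by (subst sum.swap) (simp add: mult.commute)
  also have "\<dots> = trace_map (\<lambda>w. B (A w))"
    unfolding trace_map_def
    by (intro sum.cong refl Linear_Algebra.linear_componentwise[symmetric] assms(2))
  finally show ?thesis .
qed

locale scalar_product_space =
  fixes g :: "'a::euclidean_space \<Rightarrow> 'a \<Rightarrow> real"
  assumes scalar_product: "scalar_product g"
begin

lemma g_bilinear: "bilinear g"
  and g_sym: "g x y = g y x"
  and g_nondegenerate: "(\<And>y. g x y = 0) \<Longrightarrow> x = 0"
  using scalar_product unfolding scalar_product_def nondegenerate_on_def by auto

lemmas g_simps [simp] =
  bilinear_ladd[OF g_bilinear] bilinear_radd[OF g_bilinear]
  bilinear_lsub[OF g_bilinear] bilinear_rsub[OF g_bilinear]
  bilinear_lneg[OF g_bilinear] bilinear_rneg[OF g_bilinear]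
  bilinear_lmul[OF g_bilinear] bilinear_rmul[OF g_bilinear]
  bilinear_lzero[OF g_bilinear] bilinear_rzero[OF g_bilinear]

lemma linear_g_left: "linear (\<lambda>x. g x w)"
  and linear_g_right: "linear (\<lambda>x. g w x)"
  using g_bilinear unfolding bilinear_def by auto

lemma g_sum_left [simp]: "g (sum f A) w = (\<Sum>a\<in>A. g (f a) w)"
  and g_sum_right [simp]: "g w (sum f A) = (\<Sum>a\<in>A. g w (f a))"
  by (simp_all add: linear_sum[OF linear_g_left] linear_sum[OF linear_g_right])

lemma g_eqI: "(\<And>w. g u w = g v w) \<Longrightarrow> u = v"
  using g_nondegenerate[of "u - v"] by simp

lemma represent_functional:
  assumes "linear f"
  shows "\<exists>u. \<forall>w. f w = g u w"
proof -
  define M where "M u = (\<Sum>b\<in>Basis. g u b *\<^sub>R b)" for u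
  have inner_M: "inner (M u) w = g u w" for u w
    unfolding M_def by (rule inner_sum_Basis_functional[OF linear_g_right])
  have "linear M"
    unfolding M_def by (rule linearI) (simp_all add: sum.distrib scaleR_add_left scaleR_sum_right)
  moreover have "inj M"
    by (rule injI, rule g_eqI) (metis inner_M)
  ultimately obtain u where "M u = (\<Sum>b\<in>Basis. f b *\<^sub>R b)"
    by (metis linear_injective_imp_surjective surjD)
  moreover note inner_sum_Basis_functional[OF assms]
  ultimately have "f w = g u w" for w
    using inner_M by metis
  then show ?thesis by blast
qed

definition g_dual :: "'a \<Rightarrow> 'a" where
  "g_dual b = (SOME u. \<forall>w. inner b w = g u w)"

lemma g_g_dual: "g (g_dual b) w = inner b w"
proof -
  have "linear (inner b)"
    by (rule bounded_linear.linear[OF bounded_linear_inner_right])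
  from someI_ex[OF represent_functional[OF this]] have "inner b w = g (g_dual b) w"
    unfolding g_dual_def by blast
  then show ?thesis by simp
qed

lemma sum_g_dual: "(\<Sum>b\<in>Basis. g x b *\<^sub>R g_dual b) = x"
proof (rule g_eqI)
  fix w
  have "g (\<Sum>b\<in>Basis. g x b *\<^sub>R g_dual b) w = (\<Sum>b\<in>Basis. inner w b * g x b)"
    by (simp add: g_g_dual) (rule sum.cong; simp add: inner_commute)
  also have "\<dots> = g x w"
    by (rule linear_functional_expansion[OF linear_g_right, symmetric])
  finally show "g (\<Sum>b\<in>Basis. g x b *\<^sub>R g_dual b) w = g x w" .
qed

(* Pairing the Euclidean basis with its g-dual basis, skew-adjointness turns the trace into
   its negative. *)
lemma trace_map_skew_adjoint:
  assumes S: "linear S" and skew: "\<And>u w. g (S u) w = - g u (S w)"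
  shows "trace_map S = 0"
proof -
  have S_expand: "g (g_dual b) (S b) = (\<Sum>c\<in>Basis. g b c * g (g_dual b) (S (g_dual c)))" for b
  proof -
    have "S b = S (\<Sum>c\<in>Basis. g b c *\<^sub>R g_dual c)"
      by (simp only: sum_g_dual)
    also have "\<dots> = (\<Sum>c\<in>Basis. g b c *\<^sub>R S (g_dual c))"
      by (simp add: linear_sum[OF S] linear_scale[OF S])
    finally show ?thesis by simp
  qed
  have "trace_map S = (\<Sum>b\<in>Basis. g (g_dual b) (S b))"
    unfolding trace_map_def by (simp add: g_g_dual inner_commute)
  also have "\<dots> = (\<Sum>c\<in>Basis. \<Sum>b\<in>Basis. g c b * g (g_dual b) (S (g_dual c)))"
    unfolding S_expand by (subst sum.swap) (simp add: g_sym[of b c for b c])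
  also have "\<dots> = (\<Sum>c\<in>Basis. g (\<Sum>b\<in>Basis. g c b *\<^sub>R g_dual b) (S (g_dual c)))"
    by simp
  also have "\<dots> = (\<Sum>c\<in>Basis. - g (g_dual c) (S c))"
  proof (rule sum.cong[OF refl])
    fix c
    show "g (\<Sum>b\<in>Basis. g c b *\<^sub>R g_dual b) (S (g_dual c)) = - g (g_dual c) (S c)"
      using skew[of c "g_dual c"] g_sym[of "S c" "g_dual c"] unfolding sum_g_dual by linarith
  qed
  also have "\<dots> = - trace_map S"
    unfolding trace_map_def by (simp add: g_g_dual inner_commute sum_negf)
  finally show ?thesis by simp
qed

end

locale pseudo_orthonormal_frame = scalar_product_space +
  fixes S :: "'a set" and B :: "'a set"
  assumes frame: "pseudo_orthonormal_basis g S B"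
begin

lemma finite_B: "finite B"
  and B_subset: "B \<subseteq> S"
  and independent_B: "independent B"
  and span_B: "span B = S"
  and g_basis_sq: "b \<in> B \<Longrightarrow> g b b * g b b = 1"
  and g_basis_orth: "b \<in> B \<Longrightarrow> b' \<in> B \<Longrightarrow> b \<noteq> b' \<Longrightarrow> g b b' = 0"
proof -
  show "finite B" "B \<subseteq> S" "independent B" "span B = S"
    using frame unfolding pseudo_orthonormal_basis_def by auto
  show "b \<in> B \<Longrightarrow> g b b * g b b = 1"
    using frame unfolding pseudo_orthonormal_basis_def by force
  show "b \<in> B \<Longrightarrow> b' \<in> B \<Longrightarrow> b \<noteq> b' \<Longrightarrow> g b b' = 0"
    using frame unfolding pseudo_orthonormal_basis_def by blast
qed

lemma subspace_S: "subspace S"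
  using span_B subspace_span by metis

lemma subspace_orth: "subspace (g_orth g S)"
  unfolding subspace_def g_orth_def by simp

lemma g_orth_left [simp]: "v \<in> g_orth g S \<Longrightarrow> c \<in> S \<Longrightarrow> g v c = 0"
  and g_orth_right [simp]: "v \<in> g_orth g S \<Longrightarrow> c \<in> S \<Longrightarrow> g c v = 0"
  unfolding g_orth_def using g_sym by auto

(* g k k = +-1 is its own inverse, so this is the g-orthogonal projection onto S. *)
definition proj :: "'a \<Rightarrow> 'a" where
  "proj x = (\<Sum>k\<in>B. (g x k * g k k) *\<^sub>R k)"

lemma linear_proj: "linear proj"
  unfolding proj_def
  by (rule linearI) (simp_all add: sum.distrib scaleR_add_left scaleR_sum_right algebra_simps)

lemma proj_simps [simp]:
  "proj (x + y) = proj x + proj y" "proj (x - y) = proj x - proj y" "proj (- x) = - proj x"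
  "proj (c *\<^sub>R x) = c *\<^sub>R proj x" "proj 0 = 0"
  using linear_proj by (simp_all add: linear_add linear_diff linear_neg linear_scale linear_0)

lemma basis_in [simp]: "b \<in> B \<Longrightarrow> b \<in> S"
  using B_subset by blast

lemma proj_in [simp]: "proj x \<in> S"
  unfolding proj_def span_B[symmetric] by (intro span_sum span_scale span_base)

lemma sum_basis_delta:
  fixes h :: "'a \<Rightarrow> 'b::real_vector"
  assumes k: "k \<in> B"
  shows "(\<Sum>j\<in>B. g k j *\<^sub>R h j) = g k k *\<^sub>R h k"
proof -
  have "g k j = 0" if "j \<in> B - {k}" for j
    using g_basis_orth[OF k, of j] that by auto
  then have "(\<Sum>j\<in>B - {k}. g k j *\<^sub>R h j) = 0"
    by (intro sum.neutral) simp
  then show ?thesis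
    by (simp add: sum.remove[OF finite_B k])
qed

lemma g_proj_basis: "k \<in> B \<Longrightarrow> g (proj x) k = g x k"
proof -
  assume k: "k \<in> B"
  have "g (proj x) k = (\<Sum>j\<in>B. g k j *\<^sub>R (g x j * g j j))"
    by (simp add: proj_def g_sym[of _ k] mult_ac)
  also have "\<dots> = g x k * (g k k * g k k)"
    using sum_basis_delta[OF k, of "\<lambda>j. g x j * g j j"] by simp
  finally show ?thesis
    using g_basis_sq[OF k] by simp
qed

lemma g_minus_proj: "c \<in> S \<Longrightarrow> g (x - proj x) c = 0"
  unfolding span_B[symmetric]
proof (induction rule: span_induct)
  case base
  show ?case unfolding subspace_def by simp
next
  case (step k)
  then show ?case by (simp add: g_proj_basis)
qed

lemma minus_proj_orth [simp]: "x - proj x \<in> g_orth g S"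
  unfolding g_orth_def using g_minus_proj by blast

lemma proj_id [simp]: "c \<in> S \<Longrightarrow> proj c = c"
  unfolding span_B[symmetric]
proof (induction rule: span_induct)
  case base
  show ?case unfolding subspace_def by simp
next
  case (step k)
  have "proj k = (\<Sum>j\<in>B. g k j *\<^sub>R (g j j *\<^sub>R j))"
    by (simp add: proj_def)
  also have "\<dots> = g k k *\<^sub>R (g k k *\<^sub>R k)"
    by (rule sum_basis_delta[OF step])
  finally show ?case
    using g_basis_sq[OF step] by simp
qed

lemma proj_orth [simp]: "v \<in> g_orth g S \<Longrightarrow> proj v = 0"
  unfolding proj_def using B_subset by (intro sum.neutral) auto

lemma orth_eqI:
  assumes "u \<in> g_orth g S" "u' \<in> g_orth g S" and eq: "\<And>y. y \<in> g_orth g S \<Longrightarrow> g y u = g y u'"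
  shows "u = u'"
proof (rule g_eqI)
  fix w
  have "g u w = g (w - proj w) u" and "g u' w = g (w - proj w) u'"
    using assms(1,2) by (simp_all add: g_sym[of _ w] g_sym[of _ "proj w"])
  then show "g u w = g u' w"
    using eq[OF minus_proj_orth] by simp
qed

lemma trace_map_into:
  assumes C: "linear C" and into: "\<And>w. C w \<in> S"
  shows "trace_map C = (\<Sum>k\<in>B. g k k * g (C k) k)"
proof -
  have "inner (C b) b = (\<Sum>k\<in>B. g k k * (inner k b * g (C b) k))" for b
  proof -
    have C_b: "C b = (\<Sum>k\<in>B. (g (C b) k * g k k) *\<^sub>R k)"
      using proj_id[OF into[of b]] by (simp add: proj_def)
    show ?thesis
      by (subst (1) C_b) (simp add: inner_sum_left mult_ac)
  qed
  then have "trace_map C = (\<Sum>b\<in>Basis. \<Sum>k\<in>B. g k k * (inner k b * g (C b) k))"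
    unfolding trace_map_def by simp
  also have "\<dots> = (\<Sum>k\<in>B. g k k * (\<Sum>b\<in>Basis. inner k b * g (C b) k))"
    by (subst sum.swap) (simp add: sum_distrib_left)
  also have "\<dots> = (\<Sum>k\<in>B. g k k * g (C k) k)"
  proof (rule sum.cong[OF refl])
    fix k
    have "linear (\<lambda>w. g (C w) k)"
      using linear_compose[OF C linear_g_left] by (simp add: o_def)
    from linear_functional_expansion[OF this, of k, symmetric] show
      "g k k * (\<Sum>b\<in>Basis. inner k b * g (C b) k) = g k k * g (C k) k"
      by simp
  qed
  finally show ?thesis .
qed

lemma trace_map_comp_into:
  fixes C L :: "'a \<Rightarrow> 'a"
  assumes "linear C" "\<And>w. C w \<in> S" "linear L"
  shows "trace_map (\<lambda>w. L (C w)) = (\<Sum>k\<in>B. g k k * g (C (L k)) k)"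
  using trace_map_comp_commute[OF assms(3,1)] trace_map_into[of "\<lambda>w. C (L w)"]
    linear_compose[OF assms(3,1)] assms(2) by (simp add: o_def)

lemma trace_map_proj: "trace_map proj = real (card B)"
proof -
  have "g k k * g (proj k) k = 1" if "k \<in> B" for k
    using that B_subset g_basis_sq by auto
  then show ?thesis
    using trace_map_into[OF linear_proj proj_in] by simp
qed

lemma dim_orth: "dim (g_orth g S) + card B = DIM('a)"
proof -
  have "w \<in> {x + y |x y. x \<in> g_orth g S \<and> y \<in> S}" for w
    by (rule CollectI, rule exI[of _ "w - proj w"], rule exI[of _ "proj w"]) simp
  then have "{x + y |x y. x \<in> g_orth g S \<and> y \<in> S} = UNIV"
    by blast
  moreover have "g_orth g S \<inter> S = {0}"
  proof
    show "g_orth g S \<inter> S \<subseteq> {0}"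
      using proj_id proj_orth by fastforce
    show "{0} \<subseteq> g_orth g S \<inter> S"
      using subspace_0[OF subspace_S] subspace_0[OF subspace_orth] by simp
  qed
  moreover have "dim S = card B"
    using independent_B span_B dim_span_eq_card_independent by metis
  ultimately show ?thesis
    using dim_sums_Int[OF subspace_orth subspace_S] by simp
qed

lemma trace_map_minus_proj: "trace_map (\<lambda>w. w - proj w) = real (dim (g_orth g S))"
  using dim_orth by (simp add: trace_map_diff trace_map_id trace_map_proj flip: of_nat_add)

end

locale modified_H_type_algebra =
  fixes g :: "'a::euclidean_space \<Rightarrow> 'a \<Rightarrow> real" and br :: "'a \<Rightarrow> 'a \<Rightarrow> 'a"
    and \<phi> :: "'a \<Rightarrow> real" and zb :: "'a set"
  assumes H_type: "modified_H_type g br \<phi>"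
    and center_frame: "pseudo_orthonormal_basis g (lie_center br) zb"
begin

sublocale pseudo_orthonormal_frame g "lie_center br" zb
  using H_type center_frame by unfold_locales (simp_all add: modified_H_type_def)

abbreviation Z :: "'a set" where "Z \<equiv> lie_center br"
abbreviation V :: "'a set" where "V \<equiv> g_orth g Z"
abbreviation J :: "'a \<Rightarrow> 'a \<Rightarrow> 'a" where "J \<equiv> jmap g br"

lemma br_bilinear: "bilinear br"
  and br_self: "br x x = 0"
  and br_br: "br (br x y) w = 0"
  using H_type unfolding modified_H_type_def two_step_nilpotent_def lie_bracket_def by auto

lemmas br_simps [simp] =
  bilinear_ladd[OF br_bilinear] bilinear_radd[OF br_bilinear]
  bilinear_lsub[OF br_bilinear] bilinear_rsub[OF br_bilinear]
  bilinear_lneg[OF br_bilinear] bilinear_rneg[OF br_bilinear]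
  bilinear_lmul[OF br_bilinear] bilinear_rmul[OF br_bilinear]
  bilinear_lzero[OF br_bilinear] bilinear_rzero[OF br_bilinear]

lemma br_anticomm: "br y x = - br x y"
proof -
  from br_self[of "x + y"] have "br x x + br y x + (br x y + br y y) = 0"
    by (simp only: br_simps)
  then have "br y x + br x y = 0"
    by (simp add: br_self)
  then show ?thesis
    by (simp add: eq_neg_iff_add_eq_0)
qed

lemma br_center_left [simp]: "c \<in> Z \<Longrightarrow> br c y = 0"
  by (simp add: lie_center_def)

lemma br_center_right [simp]: "c \<in> Z \<Longrightarrow> br y c = 0"
  by (subst br_anticomm) simp

lemma br_in_center [simp]: "br x y \<in> Z"
  unfolding lie_center_def using br_br by blast

lemma jmap_eqI:
  assumes u: "\<And>w. g u w = g (br x w) \<zeta>"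
  shows "J \<zeta> x = u"
proof -
  have u_orth: "u \<in> V"
    unfolding g_orth_def using u by simp
  show ?thesis
    unfolding jmap_def
  proof (rule the_equality)
    show "u \<in> V \<and> (\<forall>y\<in>V. g (br x y) \<zeta> = g y u)"
      using u_orth by (simp add: u g_sym[of _ u])
  next
    fix u' assume "u' \<in> V \<and> (\<forall>y\<in>V. g (br x y) \<zeta> = g y u')"
    then show "u' = u"
      using u_orth by (intro orth_eqI) (auto simp: u g_sym[of _ u])
  qed
qed

(* jmap is specified by pairing with v only; the identity extends to all w because both
   sides vanish on the center. *)
lemma g_jmap: "g (J \<zeta> x) w = g (br x w) \<zeta>"
proof -
  have "linear (\<lambda>w. g (br x w) \<zeta>)"
    by (rule linearI) simp_all
  then obtain u where "\<And>w. g (br x w) \<zeta> = g u w"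
    using represent_functional by blast
  then show ?thesis
    using jmap_eqI by metis
qed

lemma jmap_orth [simp]: "J \<zeta> x \<in> V"
  unfolding g_orth_def by (simp add: g_jmap)

lemma jmap_simps [simp]:
  "J (a + b) x = J a x + J b x" "J (a - b) x = J a x - J b x" "J (- a) x = - J a x"
  "J (c *\<^sub>R a) x = c *\<^sub>R J a x" "J 0 x = 0"
  "J a (x + y) = J a x + J a y" "J a (x - y) = J a x - J a y" "J a (- x) = - J a x"
  "J a (c *\<^sub>R x) = c *\<^sub>R J a x" "J a 0 = 0"
  by (rule g_eqI; simp add: g_jmap)+

lemma jmap_center [simp]: "c \<in> Z \<Longrightarrow> J a c = 0"
  by (rule g_eqI) (simp add: g_jmap)

lemma linear_br_left: "linear (\<lambda>x. br x y)"
  and linear_br_right: "linear (br x)"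
  using br_bilinear unfolding bilinear_def by auto

lemma linear_jmap_left: "linear (\<lambda>a. J a x)"
  and linear_jmap: "linear (J a)"
  by (rule linearI; simp)+

lemma jmap_skew: "g (J a x) w = - g x (J a w)"
  by (simp add: g_jmap g_sym[of x] br_anticomm[of w x])

lemma jmap_square: "z \<in> Z \<Longrightarrow> x \<in> V \<Longrightarrow> J z (J z x) = - (\<phi> z *\<^sub>R x)"
  using H_type unfolding modified_H_type_def by blast

lemma g_br_jmap_left: "z \<in> Z \<Longrightarrow> x \<in> V \<Longrightarrow> g (br (J z x) y) z = - (\<phi> z * g x y)"
  by (simp add: g_jmap[symmetric] jmap_square)

lemma g_br_jmap_right: "z \<in> Z \<Longrightarrow> y \<in> V \<Longrightarrow> g (br x (J z y)) z = \<phi> z * g x y"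
  by (simp add: g_jmap[symmetric] jmap_skew[of z x] jmap_square g_sym[of y])

lemma jmap_anticomm:
  assumes z: "z \<in> Z" and z': "z' \<in> Z"
  shows "J z (J z' w) + J z' (J z w) = - (2 * polar \<phi> z z') *\<^sub>R (w - proj w)"
proof -
  define x where "x = w - proj w"
  have x: "x \<in> V"
    unfolding x_def by simp
  have Jw: "J a w = J a x" for a
    unfolding x_def by simp
  have "z + z' \<in> Z"
    using z z' subspace_S by (simp add: subspace_add)
  from jmap_square[OF this x]
  have "J z (J z x) + J z (J z' x) + J z' (J z x) + J z' (J z' x) = - (\<phi> (z + z') *\<^sub>R x)"
    by (simp add: algebra_simps)
  then have "J z (J z' x) + J z' (J z x) = - ((\<phi> (z + z') - \<phi> z - \<phi> z') *\<^sub>R x)"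
    using jmap_square[OF z x] jmap_square[OF z' x] by (simp add: algebra_simps)
  then show ?thesis
    unfolding Jw x_def[symmetric] polar_def by simp
qed

lemma lc_nabla_eq: "lc_nabla g br x y = (1/2) *\<^sub>R (br x y - J (proj y) x - J (proj x) y)"
proof -
  define N where "N = (1/2) *\<^sub>R (br x y - J (proj y) x - J (proj x) y)"
  have koszul: "2 * g N w = g (br x y) w - g (br y w) x + g (br w x) y" for w
  proof -
    have "g (br y w) x = g (br y w) (proj x)"
      using g_orth_right[OF minus_proj_orth[of x] br_in_center[of y w]] by simp
    moreover have "g (br w x) y = - g (br x w) (proj y)"
      using g_orth_right[OF minus_proj_orth[of y] br_in_center[of w x]] br_anticomm[of w x] by simp
    ultimately show ?thesis
      by (simp add: N_def g_jmap)
  qed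
  show ?thesis
    unfolding lc_nabla_def N_def[symmetric]
  proof (rule the_equality)
    fix u assume "\<forall>w. 2 * g u w = g (br x y) w - g (br y w) x + g (br w x) y"
    then show "u = N"
      using koszul by (intro g_eqI) (metis mult_left_cancel zero_neq_numeral)
  qed (use koszul in blast)
qed

lemma curv_orth_center:
  "e \<in> V \<Longrightarrow> z \<in> Z \<Longrightarrow> curv g br w e z =
    (1/4) *\<^sub>R J (proj w) (J z e) - (1/4) *\<^sub>R br w (J z e) + (1/4) *\<^sub>R br e (J z w)"
  unfolding curv_def lc_nabla_eq by (simp add: algebra_simps)

lemma curv_orth_orth:
  "e \<in> V \<Longrightarrow> e' \<in> V \<Longrightarrow> curv g br w e e' =
    - (1/4) *\<^sub>R J (br e e') w + (1/4) *\<^sub>R J (br w e') e + (1/4) *\<^sub>R br e (J (proj w) e')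
    + (1/2) *\<^sub>R J (br w e) e'"
  unfolding curv_def lc_nabla_eq by (simp add: algebra_simps)

lemma curv_center_center:
  "z \<in> Z \<Longrightarrow> z' \<in> Z \<Longrightarrow> curv g br w z z' = - (1/4) *\<^sub>R J z (J z' w)"
  unfolding curv_def lc_nabla_eq by (simp add: algebra_simps)

lemma ricci_eq_trace: "ricci g br x y = trace_map (\<lambda>w. curv g br w x y)"
  by (simp add: ricci_def trace_map_def)

lemma ricci_orth_center:
  assumes e: "e \<in> V" and z: "z \<in> Z"
  shows "ricci g br e z = 0"
proof -
  have "trace_map (\<lambda>w. J (proj w) (J z e)) = 0"
    using trace_map_comp_into[OF linear_proj proj_in linear_jmap_left] by simp
  moreover have "trace_map (\<lambda>w. br w (J z e)) = 0"
    using trace_map_into[OF linear_br_left] by simp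
  moreover have "trace_map (\<lambda>w. br e (J z w)) = 0"
    using trace_map_into[OF linear_compose[OF linear_jmap linear_br_right]] by (simp add: o_def)
  ultimately show ?thesis
    unfolding ricci_eq_trace curv_orth_center[OF e z]
    by (simp add: trace_map_add trace_map_diff trace_map_scaleR)
qed

lemma ricci_orth:
  assumes e: "e \<in> V" and e': "e' \<in> V"
  shows "ricci g br e e' = - ((\<Sum>k\<in>zb. g k k * \<phi> k) / 2) * g e e'"
proof -
  define \<xi> where "\<xi> = (\<Sum>k\<in>zb. g k k * \<phi> k)"
  have \<xi>_sum: "(\<Sum>k\<in>zb. g k k * (\<phi> k * c)) = \<xi> * c" for c
    by (simp add: \<xi>_def sum_distrib_right mult.assoc)
  have "trace_map (J (br e e')) = 0"
    by (rule trace_map_skew_adjoint[OF linear_jmap jmap_skew])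
  moreover have "trace_map (\<lambda>w. J (br w e') e) = - (\<xi> * g e e')"
    using trace_map_comp_into[OF linear_br_left br_in_center linear_jmap_left] \<xi>_sum
    by (simp add: g_br_jmap_left e sum_negf)
  moreover have "trace_map (\<lambda>w. br e (J (proj w) e')) = \<xi> * g e e'"
    using trace_map_comp_into[OF linear_proj proj_in
        linear_compose[OF linear_jmap_left linear_br_right, unfolded o_def]] \<xi>_sum
    by (simp add: g_br_jmap_right e')
  moreover have "trace_map (\<lambda>w. J (br w e) e') = - (\<xi> * g e e')"
    using trace_map_comp_into[OF linear_br_left br_in_center linear_jmap_left] \<xi>_sum
    by (simp add: g_br_jmap_left e' g_sym[of e'] sum_negf)
  ultimately show ?thesis
    unfolding ricci_eq_trace curv_orth_orth[OF e e'] \<xi>_def[symmetric]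
    by (simp add: trace_map_add trace_map_diff trace_map_scaleR trace_map_neg)
qed

lemma ricci_center:
  assumes z: "z \<in> Z" and z': "z' \<in> Z"
  shows "ricci g br z z' = real (dim V) / 4 * polar \<phi> z z'"
proof -
  have "trace_map (\<lambda>w. J z (J z' w)) = trace_map (\<lambda>w. J z' (J z w))"
    by (rule trace_map_comp_commute[OF linear_jmap linear_jmap])
  moreover have "trace_map (\<lambda>w. J z (J z' w)) + trace_map (\<lambda>w. J z' (J z w))
      = - (2 * polar \<phi> z z') * real (dim V)"
    unfolding trace_map_add[symmetric] jmap_anticomm[OF z z'] trace_map_scaleR trace_map_minus_proj ..
  ultimately have "trace_map (\<lambda>w. J z (J z' w)) = - polar \<phi> z z' * real (dim V)"
    by simp
  then show ?thesis
    unfolding ricci_eq_trace curv_center_center[OF z z'] trace_map_neg trace_map_scaleR by simp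
qed

end

theorem theorem3p4:
  fixes g :: "'a::euclidean_space \<Rightarrow> 'a \<Rightarrow> real"
    and br :: "'a \<Rightarrow> 'a \<Rightarrow> 'a"
    and \<phi> :: "'a \<Rightarrow> real"
    and zb :: "'a set"
    and \<xi> :: real and m :: nat
  assumes "modified_H_type g br \<phi>"
    and "pseudo_orthonormal_basis g (lie_center br) zb"
    and "\<xi> = (\<Sum>zk\<in>zb. g zk zk * \<phi> zk)"
    and "m = dim (g_orth g (lie_center br))"
  shows "(\<forall>e\<in>g_orth g (lie_center br). \<forall>z\<in>lie_center br. ricci g br e z = 0)
    \<and> (\<forall>e\<in>g_orth g (lie_center br). \<forall>e'\<in>g_orth g (lie_center br).
          ricci g br e e' = - (\<xi> / 2) * g e e')
    \<and> (\<forall>z\<in>lie_center br. \<forall>z'\<in>lie_center br. ricci g br z z' = real m / 4 * polar \<phi> z z')"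
proof -
  interpret modified_H_type_algebra g br \<phi> zb
    using assms(1,2) by unfold_locales
  show ?thesis
    using ricci_orth_center ricci_orth ricci_center unfolding assms(3,4) by blast
qed

end
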